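(* Let $1\leq n\leq N$ and let $\boldsymbol{\epsilon}_N$ be the indicator vector of a rejective sampling design of size $n$ with canonical parameters $\mathbf{p}_N=(p_1,\ldots,p_N)$ and first-order inclusion probabilities $\pi_1,\ldots,\pi_N$, with $d_N=\sum_{i=1}^Np_i(1-p_i)\geq1$, and $\kappa_N=(n/N)/\min_{i\leq N}\pi_i$. Let $\mathcal{G}$ be any class of classifiers and $(X_i,Y_i)_{i\leq N}$ any data in $\mathcal{X}\times\{-1,+1\}$. Then $$\sup_{g\in\mathcal{G}}\big|\widetilde{L}_{\boldsymbol{\epsilon}_N}(g)-\bar{L}_{\boldsymbol{\epsilon}_N}(g)\big|\leq\frac1N\sum_{i=1}^N\left|\frac1{p_i}-\frac1{\pi_i}\right|\leq\frac{6N\kappa_N}{n\,d_N}.$$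
   Context: A rejective design of size $n$ with canonical parameters $\mathbf{p}_N\in(0,1)^N$, $\sum_ip_i=n$, draws $S\subseteq\{1,\ldots,N\}$ with $\mathbb{P}(S=s)=C\prod_{i\in s}p_i\prod_{i\notin s}(1-p_i)$ if $\#s=n$ and $0$ otherwise; $\epsilon_i=\mathbb{I}\{i\in S\}$, $\pi_i=\mathbb{P}(i\in S)$. The HT empirical risk is $\bar{L}_{\boldsymbol{\epsilon}_N}(g)=\frac1N\sum_{i=1}^N\frac{\epsilon_i}{\pi_i}\mathbb{I}\{g(X_i)\neq Y_i\}$ and the biased HT risk is $\widetilde{L}_{\boldsymbol{\epsilon}_N}(g)=\frac1N\sum_{i=1}^N\frac{\epsilon_i}{p_i}\mathbb{I}\{g(X_i)\neq Y_i\}$. *)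

theory Defs
  imports Main "HOL-Analysis.Analysis"
begin

definition samples :: "nat \<Rightarrow> nat \<Rightarrow> nat set set" where
  "samples N n = {s. s \<subseteq> {1..N} \<and> card s = n}"

definition rej_weight :: "nat \<Rightarrow> (nat \<Rightarrow> real) \<Rightarrow> nat set \<Rightarrow> real" where
  "rej_weight N p s = (\<Prod>i\<in>s. p i) * (\<Prod>i\<in>{1..N} - s. 1 - p i)"

definition rej_prob :: "nat \<Rightarrow> nat \<Rightarrow> (nat \<Rightarrow> real) \<Rightarrow> nat set \<Rightarrow> real" where
  "rej_prob N n p s =
     (if s \<in> samples N n
      then rej_weight N p s / (\<Sum>t\<in>samples N n. rej_weight N p t)
      else 0)"

definition incl_prob :: "nat \<Rightarrow> nat \<Rightarrow> (nat \<Rightarrow> real) \<Rightarrow> nat \<Rightarrow> real" where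
  "incl_prob N n p i = (\<Sum>s\<in>{s\<in>samples N n. i \<in> s}. rej_prob N n p s)"

definition d_N :: "nat \<Rightarrow> (nat \<Rightarrow> real) \<Rightarrow> real" where
  "d_N N p = (\<Sum>i=1..N. p i * (1 - p i))"

definition kappa_N :: "nat \<Rightarrow> nat \<Rightarrow> (nat \<Rightarrow> real) \<Rightarrow> real" where
  "kappa_N N n p = (real n / real N) / Min (incl_prob N n p ` {1..N})"

definition ht_risk :: "nat \<Rightarrow> nat set \<Rightarrow> (nat \<Rightarrow> real) \<Rightarrow> ('x \<Rightarrow> int) \<Rightarrow> (nat \<Rightarrow> 'x) \<Rightarrow> (nat \<Rightarrow> int) \<Rightarrow> real" where
  "ht_risk N S w g X Y =
     (1 / real N) * (\<Sum>i=1..N. (if i \<in> S then 1 else 0) / w i * (if g (X i) \<noteq> Y i then 1 else 0))"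

definition HT_risk :: "nat \<Rightarrow> nat \<Rightarrow> (nat \<Rightarrow> real) \<Rightarrow> nat set \<Rightarrow> ('x \<Rightarrow> int) \<Rightarrow> (nat \<Rightarrow> 'x) \<Rightarrow> (nat \<Rightarrow> int) \<Rightarrow> real" where
  "HT_risk N n p S g X Y = ht_risk N S (incl_prob N n p) g X Y"

definition biased_HT_risk :: "nat \<Rightarrow> nat set \<Rightarrow> (nat \<Rightarrow> real) \<Rightarrow> ('x \<Rightarrow> int) \<Rightarrow> (nat \<Rightarrow> 'x) \<Rightarrow> (nat \<Rightarrow> int) \<Rightarrow> real" where
  "biased_HT_risk N S p g X Y = ht_risk N S p g X Y"

end

theory Submission
  imports Defs
begin

text \<open>With the odds q i = p i / (1 - p i), the rejective design is the conditional Poisson design,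
  and its inclusion probabilities are pi j = q j * e (n - 1) (q without j) / e n (q) in terms of the
  elementary symmetric functions e k. Newton's inequalities for the e k place pi j between the
  Poisson inclusion probabilities q j / (r + q j) for the two tilts r = e n / e (n - 1) and
  r' = e (n + 1) / e n, and place those in turn between the inclusion probabilities for the sizes
  n - 1 and n + 1. Comparing the expected sizes of the tilted Poisson designs with n forces both
  tilts to deviate from 1 by at most about 1 / d_N, whence the Hajek-type bound
  abs (pi j / p j - 1) \<le> 2 / d_N.
  The risk bound itself is the triangle inequality.\<close>

section \<open>Elementary symmetric functions\<close>

definition esym :: "('a \<Rightarrow> real) \<Rightarrow> 'a set \<Rightarrow> nat \<Rightarrow> real" where
  "esym q A k = (\<Sum>s | s \<subseteq> A \<and> card s = k. \<Prod>i\<in>s. q i)"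

lemma finite_subsets_card: "finite A \<Longrightarrow> finite {s. s \<subseteq> A \<and> card s = k}"
  by (rule finite_subset[of _ "Pow A"]) auto

lemma esym_0 [simp]: "finite A \<Longrightarrow> esym q A 0 = 1"
proof -
  assume "finite A"
  then have "{s. s \<subseteq> A \<and> card s = 0} = {{}}"
    by (auto dest: finite_subset)
  then show ?thesis by (simp add: esym_def)
qed

lemma esym_empty_Suc [simp]: "esym q {} (Suc k) = 0"
  by (simp add: esym_def)

lemma esym_insert:
  assumes "finite B" "a \<notin> B"
  shows "esym q (insert a B) (Suc k) = esym q B (Suc k) + q a * esym q B k"
proof -
  let ?S = "\<lambda>k. {s. s \<subseteq> B \<and> card s = k}"
  have split: "{s. s \<subseteq> insert a B \<and> card s = Suc k} = ?S (Suc k) \<union> insert a ` ?S k"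
  proof (intro set_eqI iffI)
    fix s assume s: "s \<in> {s. s \<subseteq> insert a B \<and> card s = Suc k}"
    show "s \<in> ?S (Suc k) \<union> insert a ` ?S k"
    proof (cases "a \<in> s")
      case True
      with s assms have "s = insert a (s - {a})" "s - {a} \<in> ?S k"
        by (auto dest: finite_subset)
      then show ?thesis by blast
    qed (use s in auto)
  next
    fix s assume "s \<in> ?S (Suc k) \<union> insert a ` ?S k"
    with assms show "s \<in> {s. s \<subseteq> insert a B \<and> card s = Suc k}"
      by (auto intro: finite_subset) (metis card_insert_disjoint finite_subset subsetD)
  qed
  have inj: "inj_on (insert a) (?S k)"
    using assms(2) by (intro inj_onI) (metis insert_ident subset_iff mem_Collect_eq)
  have "(\<Sum>s\<in>insert a ` ?S k. \<Prod>i\<in>s. q i) = (\<Sum>s\<in>?S k. q a * (\<Prod>i\<in>s. q i))"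
    using assms by (subst sum.reindex[OF inj]) (auto intro!: sum.cong prod.insert dest: finite_subset)
  then show ?thesis
    unfolding esym_def split using assms
    by (subst sum.union_disjoint) (auto simp: finite_subsets_card sum_distrib_left)
qed

lemma esym_remove:
  assumes "finite A" "j \<in> A"
  shows "esym q A (Suc k) = esym q (A - {j}) (Suc k) + q j * esym q (A - {j}) k"
  using esym_insert[of "A - {j}" j q k] assms by (simp add: insert_absorb)

lemma esym_nonneg: "(\<And>i. i \<in> A \<Longrightarrow> 0 \<le> q i) \<Longrightarrow> 0 \<le> esym q A k"
  unfolding esym_def by (intro sum_nonneg prod_nonneg) auto

lemma esym_mono:
  assumes "finite A" "B \<subseteq> A" "\<And>i. i \<in> A \<Longrightarrow> 0 \<le> q i"
  shows "esym q B k \<le> esym q A k"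
  unfolding esym_def using assms
  by (intro sum_mono2 finite_subsets_card prod_nonneg) auto

lemma esym_pos_iff:
  assumes "finite A" "\<And>i. i \<in> A \<Longrightarrow> 0 < q i"
  shows "0 < esym q A k \<longleftrightarrow> k \<le> card A"
proof
  assume "0 < esym q A k"
  then have "{s. s \<subseteq> A \<and> card s = k} \<noteq> {}"
    unfolding esym_def by force
  then obtain s where "s \<subseteq> A" "card s = k" by blast
  then show "k \<le> card A" using assms(1) by (metis card_mono)
next
  assume "k \<le> card A"
  then obtain s where s: "s \<subseteq> A" "card s = k" by (meson obtain_subset_with_card_n)
  have "0 < (\<Prod>i\<in>s. q i)" using s assms by (intro prod_pos) auto
  also have "\<dots> \<le> esym q A k"
    unfolding esym_def using s assms
    by (intro member_le_sum finite_subsets_card prod_nonneg) (auto intro: less_imp_le)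
  finally show "0 < esym q A k" .
qed

lemma esym_eq_0_Suc:
  assumes "finite A" "\<And>i. i \<in> A \<Longrightarrow> 0 < q i" "esym q A k = 0"
  shows "esym q A (Suc k) = 0"
proof -
  have "\<not> Suc k \<le> card A" using esym_pos_iff[of A q k] assms by auto
  then have "\<not> 0 < esym q A (Suc k)" using esym_pos_iff[of A q "Suc k"] assms by blast
  moreover have "0 \<le> esym q A (Suc k)" using assms(2) by (intro esym_nonneg) (auto intro: less_imp_le)
  ultimately show ?thesis by simp
qed

text \<open>Adjoining an element with odds t turns consecutive values y, z, w of esym into
  y + t * x, z + t * y, w + t * z; this is the induction step of Newton's inequality.\<close>
lemma log_concave_shift:
  fixes x y z w t :: real
  assumes "0 \<le> x" "0 \<le> y" "0 \<le> z" "0 \<le> w" "0 \<le> t"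
    and "x * z \<le> y\<^sup>2" "y * w \<le> z\<^sup>2" "y = 0 \<Longrightarrow> z = 0" "z = 0 \<Longrightarrow> w = 0"
  shows "(y + t * x) * (w + t * z) \<le> (z + t * y)\<^sup>2"
proof -
  have cross: "x * w \<le> y * z"
  proof (cases "y = 0 \<or> z = 0")
    case False
    with assms have "0 < y * z" by (simp add: less_eq_real_def)
    moreover have "(x * w) * (y * z) \<le> (y * z) * (y * z)"
      using mult_mono[OF assms(6,7)] assms by (simp add: power2_eq_square algebra_simps)
    ultimately show ?thesis by (simp add: mult_le_cancel_right_pos)
  qed (use assms in auto)
  have "(z + t * y)\<^sup>2 - (y + t * x) * (w + t * z)
      = (z\<^sup>2 - y * w) + t * (y * z - x * w) + t\<^sup>2 * (y\<^sup>2 - x * z)"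
    by (simp add: power2_eq_square algebra_simps)
  also have "\<dots> \<ge> 0"
    using assms cross by (intro add_nonneg_nonneg mult_nonneg_nonneg) auto
  finally show ?thesis by simp
qed

lemma esym_log_concave:
  assumes "finite A" "\<And>i. i \<in> A \<Longrightarrow> 0 < q i"
  shows "esym q A k * esym q A (Suc (Suc k)) \<le> (esym q A (Suc k))\<^sup>2"
  using assms
proof (induction A arbitrary: k rule: finite_induct)
  case empty
  then show ?case by (cases k) simp_all
next
  case (insert a B)
  let ?g = "esym q B"
  have pos: "\<And>i. i \<in> B \<Longrightarrow> 0 < q i" and qa: "0 \<le> q a"
    using insert.prems by (auto intro: less_imp_le)
  have nonneg: "\<And>k. 0 \<le> ?g k" using pos by (intro esym_nonneg) (auto intro: less_imp_le)
  have zero: "\<And>k. ?g k = 0 \<Longrightarrow> ?g (Suc k) = 0" using esym_eq_0_Suc insert.hyps(1) pos by blast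
  note IH = insert.IH[OF pos] and ins = esym_insert[OF insert.hyps, of q]
  show ?case
  proof (cases k)
    case 0
    have "(1 + q a * 0) * (?g 2 + q a * ?g 1) \<le> (?g 1 + q a * 1)\<^sup>2"
      using IH[of 0] insert.hyps(1) nonneg zero qa
      by (intro log_concave_shift) (simp_all add: numeral_2_eq_2)
    then show ?thesis using 0 insert.hyps(1) by (simp add: ins numeral_2_eq_2)
  next
    case (Suc m)
    have "(?g (Suc m) + q a * ?g m) * (?g (Suc (Suc (Suc m))) + q a * ?g (Suc (Suc m)))
        \<le> (?g (Suc (Suc m)) + q a * ?g (Suc m))\<^sup>2"
      using IH[of m] IH[of "Suc m"] nonneg zero qa by (intro log_concave_shift) simp_all
    then show ?thesis using Suc by (simp add: ins)
  qed
qed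

lemma sum_mult_esym_remove:
  assumes "finite A"
  shows "(\<Sum>j\<in>A. q j * esym q (A - {j}) k) = real (Suc k) * esym q A (Suc k)"
  using assms
proof (induction A arbitrary: k rule: finite_induct)
  case (insert a B)
  have rem: "\<And>j. j \<in> B \<Longrightarrow> insert a B - {j} = insert a (B - {j})"
    using insert.hyps by auto
  have "(\<Sum>j\<in>insert a B. q j * esym q (insert a B - {j}) k)
      = q a * esym q B k + (\<Sum>j\<in>B. q j * esym q (insert a (B - {j})) k)"
    using insert.hyps by (simp add: rem)
  also have "\<dots> = real (Suc k) * esym q (insert a B) (Suc k)"
  proof (cases k)
    case 0
    have "(\<Sum>j\<in>B. q j) = esym q B (Suc 0)"
      using insert.IH[of 0] insert.hyps(1) by simp
    with 0 show ?thesis using insert.hyps by (simp add: esym_insert)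
  next
    case (Suc m)
    have "(\<Sum>j\<in>B. q j * esym q (insert a (B - {j})) k)
        = (\<Sum>j\<in>B. q j * esym q (B - {j}) k) + q a * (\<Sum>j\<in>B. q j * esym q (B - {j}) m)"
      using insert.hyps unfolding Suc
      by (simp add: esym_insert sum.distrib sum_distrib_left algebra_simps)
    then show ?thesis using insert Suc by (simp add: esym_insert algebra_simps)
  qed
  finally show ?case .
qed simp

section \<open>Inclusion probabilities of the conditional Poisson design\<close>

text \<open>cp_incl q A k j is the inclusion probability of j in a conditional Poisson sample of
  size Suc k (not k) drawn from A with odds q.\<close>
definition cp_incl :: "('a \<Rightarrow> real) \<Rightarrow> 'a set \<Rightarrow> nat \<Rightarrow> 'a \<Rightarrow> real" where
  "cp_incl q A k j = q j * esym q (A - {j}) k / esym q A (Suc k)"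

lemma divide_le_divide_cross:
  fixes a b c e :: real
  assumes "0 < b" "0 < e" "a * e \<le> c * b"
  shows "a / b \<le> c / e"
  using assms by (simp add: frac_le_eq divide_nonpos_pos)

lemma odds_ratio_eq:
  fixes q a b :: real
  assumes "0 < a"
  shows "q / (b / a + q) = q * a / (b + q * a)"
  using assms by (simp add: divide_simps)

lemma sum_cp_incl:
  assumes "finite A" "0 < esym q A (Suc k)"
  shows "(\<Sum>j\<in>A. cp_incl q A k j) = real (Suc k)"
  using assms unfolding cp_incl_def
  by (simp add: sum_divide_distrib[symmetric] sum_mult_esym_remove)

lemma cp_incl_pos:
  assumes "finite A" "\<And>i. i \<in> A \<Longrightarrow> 0 < q i" "j \<in> A" "Suc k \<le> card A"
  shows "0 < cp_incl q A k j"
proof -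
  have "0 < esym q (A - {j}) k" "0 < esym q A (Suc k)"
    using assms esym_pos_iff[of "A - {j}" q k] esym_pos_iff[of A q "Suc k"] by auto
  then show ?thesis unfolding cp_incl_def using assms by simp
qed

lemma cp_incl_lower:
  assumes fin: "finite A" and q: "\<And>i. i \<in> A \<Longrightarrow> 0 < q i" and j: "j \<in> A"
    and k: "Suc k \<le> card A"
  shows "q j / (esym q A (Suc k) / esym q A k + q j) \<le> cp_incl q A k j"
proof -
  let ?G = "esym q (A - {j})" and ?a = "esym q A k" and ?b = "esym q A (Suc k)"
  have a: "0 < ?a" and b: "0 < ?b"
    using esym_pos_iff[OF fin q] k by simp_all
  have qj: "0 < q j" using q j .
  have rem: "?b = ?G (Suc k) + q j * ?G k" using esym_remove[OF fin j] .
  have ratio: "?a * ?G (Suc k) \<le> ?G k * ?b"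
  proof (cases k)
    case 0
    then show ?thesis using fin rem qj by simp
  next
    case (Suc m)
    have "?G m * ?G (Suc (Suc m)) \<le> (?G (Suc m))\<^sup>2"
      using fin q by (intro esym_log_concave) auto
    moreover have "?a = ?G (Suc m) + q j * ?G m" using esym_remove[OF fin j] Suc by simp
    ultimately show ?thesis
      using Suc rem qj by (simp add: power2_eq_square algebra_simps)
  qed
  have "q j * ?a * ?b - q j * ?G k * (?b + q j * ?a) = q j * (?a * ?G (Suc k) - ?G k * ?b)"
    by (simp add: rem algebra_simps)
  also have "\<dots> \<le> 0" using ratio qj by (simp add: mult_nonneg_nonpos)
  finally have "q j * ?a * ?b \<le> q j * ?G k * (?b + q j * ?a)" by simp
  then show ?thesis
    unfolding cp_incl_def odds_ratio_eq[OF a] using a b qj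
    by (intro divide_le_divide_cross) (simp_all add: add_pos_pos)
qed

lemma cp_incl_upper:
  assumes fin: "finite A" and q: "\<And>i. i \<in> A \<Longrightarrow> 0 < q i" and j: "j \<in> A"
    and k: "Suc (Suc k) \<le> card A"
  shows "cp_incl q A k j \<le> q j / (esym q A (Suc (Suc k)) / esym q A (Suc k) + q j)"
proof -
  let ?G = "esym q (A - {j})" and ?b = "esym q A (Suc k)" and ?c = "esym q A (Suc (Suc k))"
  have b: "0 < ?b" and c: "0 < ?c"
    using esym_pos_iff[OF fin q] k by simp_all
  have qj: "0 < q j" using q j .
  have rem_b: "?b = ?G (Suc k) + q j * ?G k" and rem_c: "?c = ?G (Suc (Suc k)) + q j * ?G (Suc k)"
    using esym_remove[OF fin j] by blast+
  have "?G k * ?G (Suc (Suc k)) \<le> (?G (Suc k))\<^sup>2"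
    using fin q by (intro esym_log_concave) auto
  moreover have "?b * ?G (Suc k) - ?G k * ?c = (?G (Suc k))\<^sup>2 - ?G k * ?G (Suc (Suc k))"
    by (simp add: rem_b rem_c power2_eq_square algebra_simps)
  ultimately have ratio: "?G k * ?c \<le> ?b * ?G (Suc k)" by simp
  have "q j * ?G k * (?c + q j * ?b) - q j * ?b * ?b = q j * (?G k * ?c - ?b * ?G (Suc k))"
    by (simp add: rem_b algebra_simps)
  also have "\<dots> \<le> 0" using ratio qj by (simp add: mult_nonneg_nonpos)
  finally have "q j * ?G k * (?c + q j * ?b) \<le> q j * ?b * ?b" by simp
  then show ?thesis
    unfolding cp_incl_def odds_ratio_eq[OF b] using b c qj
    by (intro divide_le_divide_cross) (simp_all add: add_pos_pos)
qed

lemma cp_incl_le_twice: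
  assumes fin: "finite A" and q: "\<And>i. i \<in> A \<Longrightarrow> 0 < q i" and j: "j \<in> A"
    and k: "Suc k \<le> card A" and mono: "esym q A k \<le> esym q A (Suc k)"
  shows "cp_incl q A k j \<le> 2 * (q j / (1 + q j))"
proof -
  let ?G = "esym q (A - {j})" and ?b = "esym q A (Suc k)"
  have b: "0 < ?b" using esym_pos_iff[OF fin q] k by simp
  have qj: "0 < q j" using q j .
  have G: "\<And>l. 0 \<le> ?G l" using q by (intro esym_nonneg) (auto intro: less_imp_le)
  have rem: "?b = ?G (Suc k) + q j * ?G k" using esym_remove[OF fin j] .
  have "q j * ?G k \<le> ?b"
    using rem G[of "Suc k"] by simp
  moreover have "?G k \<le> esym q A k"
    using q by (intro esym_mono[OF fin]) (auto intro: less_imp_le)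
  then have "?G k \<le> ?b" using mono by linarith
  ultimately have "(1 + q j) * ?G k \<le> 2 * ?b"
  proof (cases "1 \<le> q j")
    case True
    then have "(1 + q j) * ?G k \<le> (q j + q j) * ?G k" using G[of k] by (intro mult_right_mono) auto
    with \<open>q j * ?G k \<le> ?b\<close> show ?thesis by (simp add: algebra_simps)
  next
    case False
    then have "(1 + q j) * ?G k \<le> 2 * ?G k" using G[of k] by (intro mult_right_mono) auto
    with \<open>?G k \<le> ?b\<close> show ?thesis by simp
  qed
  then have "q j * ((1 + q j) * ?G k) \<le> q j * (2 * ?b)"
    using qj by (intro mult_left_mono) auto
  then have "q j * ?G k * (1 + q j) \<le> 2 * q j * ?b"
    by (simp add: algebra_simps)
  then show ?thesis
    unfolding cp_incl_def using b qj by (simp add: divide_le_divide_cross)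
qed

section \<open>Tilted Poisson designs and the relative deviation of inclusion probabilities\<close>

text \<open>The expected size of a Poisson sample from A with odds q j / r.\<close>
definition tilted_size :: "('a \<Rightarrow> real) \<Rightarrow> 'a set \<Rightarrow> real \<Rightarrow> real" where
  "tilted_size q A r = (\<Sum>j\<in>A. q j / (r + q j))"

lemma tilted_size_esym_ratio:
  assumes fin: "finite A" and q: "\<And>i. i \<in> A \<Longrightarrow> 0 < q i" and k: "Suc k \<le> card A"
  defines "r \<equiv> esym q A (Suc k) / esym q A k"
  shows "real k \<le> tilted_size q A r" and "tilted_size q A r \<le> real (Suc k)"
proof -
  have e: "0 < esym q A (Suc k)" and e0: "0 < esym q A k"
    using esym_pos_iff[of A q] fin q k by auto
  show "tilted_size q A r \<le> real (Suc k)"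
    unfolding tilted_size_def r_def sum_cp_incl[OF fin e, symmetric]
    using cp_incl_lower[where A=A and q=q and k=k] fin q k by (intro sum_mono) auto
  show "real k \<le> tilted_size q A r"
  proof (cases k)
    case 0
    have "0 < r" unfolding r_def using e e0 by simp
    then have "0 \<le> tilted_size q A r"
      unfolding tilted_size_def using q by (intro sum_nonneg) (simp add: less_imp_le add_pos_pos)
    then show ?thesis using 0 by simp
  next
    case (Suc m)
    have e': "0 < esym q A (Suc m)" using esym_pos_iff[OF fin q] k Suc by simp
    show ?thesis
      unfolding tilted_size_def r_def Suc sum_cp_incl[OF fin e', symmetric]
      using cp_incl_upper[where A=A and q=q and k=m] fin q k Suc by (intro sum_mono) auto
  qed
qed

lemma tilted_size_less:
  assumes "finite A" "A \<noteq> {}" "\<And>i. i \<in> A \<Longrightarrow> 0 < q i" "0 < r" "r < 1"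
  shows "tilted_size q A 1 < tilted_size q A r"
  unfolding tilted_size_def using assms
  by (intro sum_strict_mono divide_strict_left_mono) (auto simp: add_pos_pos)

lemma odds_tilt_bounds:
  fixes q r :: real
  assumes q: "0 < q" and r: "0 < r"
  defines "p \<equiv> q / (1 + q)"
  shows "(1 - 1 / r) * (p * (1 - p)) \<le> p - q / (r + q)"
    and "p - q / (r + q) \<le> (r - 1) * (p * (1 - p))"
proof -
  have dev: "p - q / (r + q) = q * (r - 1) / ((1 + q) * (r + q))"
    and var: "p * (1 - p) = q / (1 + q)\<^sup>2"
    unfolding p_def using q r by (simp_all add: divide_simps) (simp_all add: algebra_simps power2_eq_square)
  have "p - q / (r + q) - (1 - 1 / r) * (p * (1 - p))
      = q\<^sup>2 * (r - 1)\<^sup>2 / (r * (1 + q)\<^sup>2 * (r + q))"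
    unfolding dev var using q r by (simp add: divide_simps) (simp add: algebra_simps power2_eq_square)
  moreover have "0 \<le> q\<^sup>2 * (r - 1)\<^sup>2 / (r * (1 + q)\<^sup>2 * (r + q))" using q r by simp
  ultimately show "(1 - 1 / r) * (p * (1 - p)) \<le> p - q / (r + q)" by linarith
  have "(r - 1) * (p * (1 - p)) - (p - q / (r + q)) = q * (r - 1)\<^sup>2 / ((1 + q)\<^sup>2 * (r + q))"
    unfolding dev var using q r by (simp add: divide_simps) (simp add: algebra_simps power2_eq_square)
  moreover have "0 \<le> q * (r - 1)\<^sup>2 / ((1 + q)\<^sup>2 * (r + q))" using q r by simp
  ultimately show "p - q / (r + q) \<le> (r - 1) * (p * (1 - p))" by linarith
qed

lemma tilted_size_deviation:
  assumes fin: "finite A" and q: "\<And>i. i \<in> A \<Longrightarrow> 0 < q i" and r: "0 < r"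
  defines "d \<equiv> \<Sum>j\<in>A. q j / (1 + q j) * (1 - q j / (1 + q j))"
  shows "(1 - 1 / r) * d \<le> tilted_size q A 1 - tilted_size q A r"
    and "tilted_size q A 1 - tilted_size q A r \<le> (r - 1) * d"
proof -
  have diff: "tilted_size q A 1 - tilted_size q A r = (\<Sum>j\<in>A. q j / (1 + q j) - q j / (r + q j))"
    unfolding tilted_size_def by (simp add: sum_subtractf)
  show "(1 - 1 / r) * d \<le> tilted_size q A 1 - tilted_size q A r"
    unfolding diff d_def sum_distrib_left using odds_tilt_bounds(1) q r by (intro sum_mono) auto
  show "tilted_size q A 1 - tilted_size q A r \<le> (r - 1) * d"
    unfolding diff d_def sum_distrib_left using odds_tilt_bounds(2) q r by (intro sum_mono) auto
qed

lemma relative_deviation_le: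
  fixes q d r1 r2 x :: real
  assumes q: "0 < q" and d: "0 < d" and r1: "1 \<le> r1" and r2: "0 < r2"
    and dev1: "(1 - 1 / r1) * d \<le> 1" and dev2: "(1 - r2) * d \<le> 1"
    and lower: "q / (r1 + q) \<le> x" and upper: "x \<le> q / (r2 + q)" and twice: "x \<le> 2 * (q / (1 + q))"
  shows "\<bar>x / (q / (1 + q)) - 1\<bar> \<le> 2 / d"
proof -
  define \<rho> where "\<rho> = x / (q / (1 + q))"
  have p: "0 < q / (1 + q)" using q by simp
  have "(1 + q) / (r1 + q) \<le> \<rho>"
    using divide_right_mono[OF lower, of "q / (1 + q)"] p q r1 unfolding \<rho>_def
    by (simp add: divide_simps)
  then have "1 - \<rho> \<le> (r1 - 1) / (r1 + q)"
    using q r1 by (simp add: diff_divide_distrib[symmetric] field_simps)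
  also have "\<dots> \<le> (r1 - 1) / r1" using q r1 by (intro divide_left_mono) auto
  also have "\<dots> \<le> 1 / d" using dev1 d r1 by (simp add: field_simps)
  finally have below: "1 - \<rho> \<le> 2 / d" using d by (simp add: divide_right_mono order_trans)
  have "\<rho> \<le> 2" using twice unfolding \<rho>_def pos_divide_le_eq[OF p] by (simp add: mult.commute)
  have "\<rho> \<le> (1 + q) / (r2 + q)"
    using divide_right_mono[OF upper, of "q / (1 + q)"] p q r2 unfolding \<rho>_def
    by (simp add: divide_simps)
  have above: "\<rho> - 1 \<le> 2 / d"
  proof (cases "d \<le> 2")
    case True
    then have "1 \<le> 2 / d" using d by (simp add: le_divide_eq)
    then show ?thesis using \<open>\<rho> \<le> 2\<close> by linarith
  next
    case False
    have "(1 + q) / (r2 + q) \<le> 1 \<or> (1 + q) / (r2 + q) \<le> 1 / r2"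
      using q r2 by (cases "r2 \<le> 1") (simp_all add: divide_simps algebra_simps mult_left_mono)
    moreover have "1 / r2 - 1 \<le> 2 / d"
    proof -
      have "(d - 1) / d \<le> r2" using dev2 d by (simp add: field_simps)
      then have "1 / r2 \<le> d / (d - 1)"
        using False r2 by (simp add: divide_simps mult.commute)
      then have "1 / r2 - 1 \<le> d / (d - 1) - 1" by simp
      also have "\<dots> = 1 / (d - 1)" using False by (simp add: field_simps)
      also have "\<dots> \<le> 2 / d" using False by (simp add: field_simps)
      finally show ?thesis .
    qed
    moreover have "0 \<le> 2 / d" using d by simp
    ultimately show ?thesis using \<open>\<rho> \<le> (1 + q) / (r2 + q)\<close> by (elim disjE) linarith+
  qed
  show ?thesis using below above unfolding \<rho>_def by linarith
qed

lemma cp_incl_relative_deviation: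
  assumes fin: "finite A" and q: "\<And>i. i \<in> A \<Longrightarrow> 0 < q i" and j: "j \<in> A"
    and size: "(\<Sum>i\<in>A. q i / (1 + q i)) = real (Suc k)"
  defines "d \<equiv> \<Sum>i\<in>A. q i / (1 + q i) * (1 - q i / (1 + q i))"
  shows "\<bar>cp_incl q A k j / (q j / (1 + q j)) - 1\<bar> \<le> 2 / d"
proof -
  define r1 where "r1 = esym q A (Suc k) / esym q A k"
  define r2 where "r2 = esym q A (Suc (Suc k)) / esym q A (Suc k)"
  have ne: "A \<noteq> {}" using j by auto
  have "(\<Sum>i\<in>A. q i / (1 + q i)) < (\<Sum>i\<in>A. 1)"
    using fin ne q by (intro sum_strict_mono) (auto simp: add_pos_pos)
  then have card: "Suc (Suc k) \<le> card A" using size by simp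
  have e: "0 < esym q A k" "0 < esym q A (Suc k)" "0 < esym q A (Suc (Suc k))"
    using esym_pos_iff[of A q] fin q card by auto
  have r: "0 < r1" "0 < r2" unfolding r1_def r2_def using e by simp_all
  have size1: "tilted_size q A 1 = real (Suc k)" using size by (simp add: tilted_size_def add.commute)
  note t1 = tilted_size_esym_ratio[of A q k, folded r1_def]
    and t2 = tilted_size_esym_ratio[of A q "Suc k", folded r2_def]
  have "1 \<le> r1"
  proof (rule ccontr)
    assume "\<not> 1 \<le> r1"
    then have "tilted_size q A 1 < tilted_size q A r1" using tilted_size_less[of A q r1] fin ne q r by auto
    then show False using t1(2) fin q card size1 by simp
  qed
  have d: "0 < d"
    unfolding d_def using fin ne q by (intro sum_pos) (auto simp: field_simps add_pos_pos)
  have "(1 - 1 / r1) * d \<le> 1"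
    using tilted_size_deviation(1)[of A q r1] t1(1) fin q card size1 r unfolding d_def by simp
  moreover have "(1 - r2) * d \<le> 1"
    using tilted_size_deviation(2)[of A q r2] t2(2) fin q card size1 r unfolding d_def
    by (simp add: algebra_simps)
  moreover have "esym q A k \<le> esym q A (Suc k)"
    using \<open>1 \<le> r1\<close> e unfolding r1_def by (simp add: le_divide_eq)
  ultimately show ?thesis
    using cp_incl_lower[of A q j k] cp_incl_upper[of A q j k] cp_incl_le_twice[of A q j k]
      fin q j card d r \<open>1 \<le> r1\<close> unfolding r1_def r2_def
    by (intro relative_deviation_le) auto
qed

section \<open>Rejective sampling and Horvitz--Thompson risks\<close>

lemma rej_weight_eq_odds:
  assumes p: "\<forall>i\<in>{1..N}. p i < 1" and s: "s \<subseteq> {1..N}"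
  shows "rej_weight N p s = (\<Prod>i\<in>{1..N}. 1 - p i) * (\<Prod>i\<in>s. p i / (1 - p i))"
proof -
  have "\<And>i. i \<in> s \<Longrightarrow> 1 - p i \<noteq> 0" using p s by force
  then have "(\<Prod>i\<in>s. p i) = (\<Prod>i\<in>s. p i / (1 - p i)) * (\<Prod>i\<in>s. 1 - p i)"
    unfolding prod.distrib[symmetric] by (intro prod.cong) auto
  moreover have "(\<Prod>i\<in>{1..N}. 1 - p i) = (\<Prod>i\<in>{1..N} - s. 1 - p i) * (\<Prod>i\<in>s. 1 - p i)"
    using prod.subset_diff[OF s] by simp
  ultimately show ?thesis unfolding rej_weight_def by (simp add: algebra_simps)
qed

lemma sum_prod_subsets_containing:
  assumes "finite A" "j \<in> A"
  shows "(\<Sum>s | s \<subseteq> A \<and> card s = Suc k \<and> j \<in> s. \<Prod>i\<in>s. q i) = q j * esym q (A - {j}) k"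
proof -
  let ?S = "{s. s \<subseteq> A \<and> card s = Suc k}"
  have split: "?S = {s \<in> ?S. j \<in> s} \<union> {s \<in> ?S. j \<notin> s}" by auto
  have "esym q A (Suc k) = (\<Sum>s\<in>{s \<in> ?S. j \<in> s}. \<Prod>i\<in>s. q i) + (\<Sum>s\<in>{s \<in> ?S. j \<notin> s}. \<Prod>i\<in>s. q i)"
    unfolding esym_def using finite_subsets_card[OF assms(1), of "Suc k"]
    by (subst split, subst sum.union_disjoint) (auto elim: finite_subset[rotated])
  moreover have "{s \<in> ?S. j \<notin> s} = {s. s \<subseteq> A - {j} \<and> card s = Suc k}" by auto
  ultimately have "esym q A (Suc k) = (\<Sum>s\<in>{s \<in> ?S. j \<in> s}. \<Prod>i\<in>s. q i) + esym q (A - {j}) (Suc k)"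
    by (simp add: esym_def)
  then show ?thesis using esym_remove[OF assms] by (simp add: conj_assoc)
qed

lemma incl_prob_eq_cp_incl:
  assumes p: "\<forall>i\<in>{1..N}. 0 < p i \<and> p i < 1" and j: "j \<in> {1..N}"
  shows "incl_prob N (Suc k) p j = cp_incl (\<lambda>i. p i / (1 - p i)) {1..N} k j"
proof -
  define q where "q = (\<lambda>i. p i / (1 - p i))"
  define C where "C = (\<Prod>i\<in>{1..N}. 1 - p i)"
  have C: "0 < C" unfolding C_def using p by (intro prod_pos) auto
  have weight: "\<And>s. s \<in> samples N (Suc k) \<Longrightarrow> rej_weight N p s = C * (\<Prod>i\<in>s. q i)"
    using rej_weight_eq_odds p unfolding samples_def C_def q_def by auto
  have total: "(\<Sum>t\<in>samples N (Suc k). rej_weight N p t) = C * esym q {1..N} (Suc k)"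
    unfolding esym_def sum_distrib_left by (intro sum.cong) (auto simp: samples_def weight)
  have "incl_prob N (Suc k) p j
      = (\<Sum>s\<in>{s \<in> samples N (Suc k). j \<in> s}. C * (\<Prod>i\<in>s. q i)) / (C * esym q {1..N} (Suc k))"
    unfolding incl_prob_def rej_prob_def total sum_divide_distrib
    by (intro sum.cong) (auto simp: weight)
  also have "\<dots> = q j * esym q ({1..N} - {j}) k / esym q {1..N} (Suc k)"
    using sum_prod_subsets_containing[of "{1..N}" j q k] j C
    by (simp add: sum_distrib_left[symmetric] samples_def conj_assoc)
  finally show ?thesis unfolding cp_incl_def q_def .
qed

lemma incl_prob_relative_deviation:
  assumes n: "1 \<le> n" and p: "\<forall>i\<in>{1..N}. 0 < p i \<and> p i < 1"
    and size: "(\<Sum>i=1..N. p i) = real n" and j: "j \<in> {1..N}"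
  shows "\<bar>incl_prob N n p j / p j - 1\<bar> \<le> 2 / d_N N p"
proof -
  obtain k where k: "n = Suc k" using n by (cases n) auto
  define q where "q = (\<lambda>i. p i / (1 - p i))"
  have q: "\<And>i. i \<in> {1..N} \<Longrightarrow> 0 < q i" using p unfolding q_def by simp
  have odds: "q i / (1 + q i) = p i" if "i \<in> {1..N}" for i
  proof -
    have "p i < 1" using p that by blast
    then show ?thesis unfolding q_def by (simp add: divide_simps)
  qed
  have d: "(\<Sum>i\<in>{1..N}. q i / (1 + q i) * (1 - q i / (1 + q i))) = d_N N p"
    unfolding d_N_def by (intro sum.cong) (simp_all add: odds)
  have "\<bar>cp_incl q {1..N} k j / (q j / (1 + q j)) - 1\<bar>
      \<le> 2 / (\<Sum>i\<in>{1..N}. q i / (1 + q i) * (1 - q i / (1 + q i)))"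
    using size odds k by (intro cp_incl_relative_deviation q j) simp_all
  then show ?thesis
    unfolding incl_prob_eq_cp_incl[OF p j, of k, folded q_def] k d odds[OF j] .
qed

lemma incl_prob_pos:
  assumes "1 \<le> n" "n \<le> N" "\<forall>i\<in>{1..N}. 0 < p i \<and> p i < 1" "j \<in> {1..N}"
  shows "0 < incl_prob N n p j"
proof -
  obtain k where "n = Suc k" using assms(1) by (cases n) auto
  then show ?thesis
    using assms incl_prob_eq_cp_incl[of N p j k] by (auto intro!: cp_incl_pos)
qed

lemma ht_risk_diff_le:
  "\<bar>ht_risk N S v g X Y - ht_risk N S w g X Y\<bar> \<le> (1 / real N) * (\<Sum>i=1..N. \<bar>1 / v i - 1 / w i\<bar>)"
proof -
  define e where "e i = (if i \<in> S then 1 else 0) * (if g (X i) \<noteq> Y i then 1 else (0::real))" for i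
  have risk: "ht_risk N S u g X Y = (1 / real N) * (\<Sum>i=1..N. e i * (1 / u i))" for u
    unfolding ht_risk_def e_def by (intro arg_cong[where f="(*) _"] sum.cong) auto
  have "ht_risk N S v g X Y - ht_risk N S w g X Y = (1 / real N) * (\<Sum>i=1..N. e i * (1 / v i - 1 / w i))"
    by (simp only: risk sum_subtractf[symmetric] right_diff_distrib[symmetric])
  also have "\<bar>\<dots>\<bar> = (1 / real N) * \<bar>\<Sum>i=1..N. e i * (1 / v i - 1 / w i)\<bar>"
    by (simp add: abs_mult)
  also have "\<dots> \<le> (1 / real N) * (\<Sum>i=1..N. \<bar>e i * (1 / v i - 1 / w i)\<bar>)"
    by (intro mult_left_mono sum_abs) simp
  also have "\<dots> \<le> (1 / real N) * (\<Sum>i=1..N. \<bar>1 / v i - 1 / w i\<bar>)"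
    unfolding e_def by (intro mult_left_mono sum_mono) (auto simp: abs_mult)
  finally show ?thesis .
qed

lemma mean_abs_inv_diff_le:
  fixes p \<pi> :: "nat \<Rightarrow> real"
  assumes N: "1 \<le> N" and bound: "\<forall>i\<in>{1..N}. 0 < p i \<and> 0 < \<pi> i \<and> \<bar>\<pi> i / p i - 1\<bar> \<le> c"
  shows "(1 / real N) * (\<Sum>i=1..N. \<bar>1 / p i - 1 / \<pi> i\<bar>) \<le> c / Min (\<pi> ` {1..N})"
proof -
  let ?m = "Min (\<pi> ` {1..N})"
  have m: "0 < ?m" using bound N by (subst Min_gr_iff) auto
  have c: "0 \<le> c" using bound N by force
  have each: "\<bar>1 / p i - 1 / \<pi> i\<bar> \<le> c / ?m" if i: "i \<in> {1..N}" for i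
  proof -
    have pos: "0 < p i" "0 < \<pi> i" and dev: "\<bar>\<pi> i / p i - 1\<bar> \<le> c" using bound i by blast+
    then have "1 / p i - 1 / \<pi> i = (\<pi> i / p i - 1) / \<pi> i" by (simp add: field_simps)
    then have "\<bar>1 / p i - 1 / \<pi> i\<bar> = \<bar>\<pi> i / p i - 1\<bar> / \<pi> i" using pos by simp
    also have "\<dots> \<le> c / \<pi> i" using pos dev by (intro divide_right_mono) auto
    also have "\<dots> \<le> c / ?m" using i m c by (intro divide_left_mono Min_le) auto
    finally show ?thesis .
  qed
  have "(\<Sum>i=1..N. \<bar>1 / p i - 1 / \<pi> i\<bar>) \<le> (\<Sum>i=1..N. c / ?m)"
    using each by (rule sum_mono)
  then have "(1 / real N) * (\<Sum>i=1..N. \<bar>1 / p i - 1 / \<pi> i\<bar>) \<le> (1 / real N) * (real N * (c / ?m))"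
    by (intro mult_left_mono) auto
  then show ?thesis using N by simp
qed

theorem mainTheorem7:
  fixes N n :: nat and p :: "nat \<Rightarrow> real"
    and G :: "('x \<Rightarrow> int) set" and X :: "nat \<Rightarrow> 'x" and Y :: "nat \<Rightarrow> int"
    and S :: "nat set"
  assumes "1 \<le> n" and "n \<le> N"
    and "\<forall>i\<in>{1..N}. 0 < p i \<and> p i < 1"
    and "(\<Sum>i=1..N. p i) = real n"
    and "d_N N p \<ge> 1"
    and "\<forall>i\<in>{1..N}. Y i \<in> {-1, 1}"
    and "S \<in> samples N n"
  shows "(\<forall>g\<in>G. \<bar>biased_HT_risk N S p g X Y - HT_risk N n p S g X Y\<bar>
              \<le> (1 / real N) * (\<Sum>i=1..N. \<bar>1 / p i - 1 / incl_prob N n p i\<bar>))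
       \<and> (1 / real N) * (\<Sum>i=1..N. \<bar>1 / p i - 1 / incl_prob N n p i\<bar>)
              \<le> 6 * real N * kappa_N N n p / (real n * d_N N p)"
proof
  show "\<forall>g\<in>G. \<bar>biased_HT_risk N S p g X Y - HT_risk N n p S g X Y\<bar>
      \<le> (1 / real N) * (\<Sum>i=1..N. \<bar>1 / p i - 1 / incl_prob N n p i\<bar>)"
    unfolding biased_HT_risk_def HT_risk_def by (intro ballI ht_risk_diff_le)
  let ?m = "Min (incl_prob N n p ` {1..N})"
  have dev: "\<forall>i\<in>{1..N}. 0 < p i \<and> 0 < incl_prob N n p i \<and> \<bar>incl_prob N n p i / p i - 1\<bar> \<le> 2 / d_N N p"
    using assms(1-4) incl_prob_pos incl_prob_relative_deviation by blast
  have m: "0 < ?m" using dev assms(1,2) by (subst Min_gr_iff) auto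
  have "(1 / real N) * (\<Sum>i=1..N. \<bar>1 / p i - 1 / incl_prob N n p i\<bar>) \<le> 2 / d_N N p / ?m"
    using dev assms(1,2) by (intro mean_abs_inv_diff_le) auto
  also have "\<dots> \<le> 6 / d_N N p / ?m"
    using assms(5) m by (intro divide_right_mono) auto
  also have "\<dots> = 6 * real N * kappa_N N n p / (real n * d_N N p)"
    using assms(1,2) unfolding kappa_N_def by (simp add: field_simps)
  finally show "(1 / real N) * (\<Sum>i=1..N. \<bar>1 / p i - 1 / incl_prob N n p i\<bar>)
      \<le> 6 * real N * kappa_N N n p / (real n * d_N N p)" .
qed

end
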